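(* Let $f(n,k)={n\brack k}{n+k\brack k}$. For all integers $n,i,k\ge0$, as an identity of polynomials in $q$, \[ f(n,i)\,f(n,k)=\sum_{j\ge0} q^{(n-j)(k+i-j)}\,{i+k\brack i}{j\brack j-i,\,j-k,\,i+k-j}\, f(n,j). \] Consequently (taking $B(k,j,i)=-(k+i-j)j$ and $C(k,j,r,n)=(rk-j)n$), defining $P^{(1)}_{k,k}=1$, $P^{(1)}_{k,j}=0$ for $j\ne k$ and $P^{(r+1)}_{k,j}=\sum_i q^{-(k+i-j)j}{i+k\brack i}{j\brack j-i,\,j-k,\,i+k-j}P^{(r)}_{k,i}$, one has $f(n,k)^r=\sum_j q^{(rk-j)n}f(n,j)P^{(r)}_{k,j}$ for all $n,k\ge0$, $r\ge1$.
   Context: $q$ is an indeterminate; $(q)_0=1$, $(q)_m=(1-q)(1-q^2)\cdots(1-q^m)$. The $q$-binomial ${n\brack k}=\frac{(q)_n}{(q)_k(q)_{n-k}}$ if $0\le k\le n$ and $0$ otherwise. The $q$-multinomial ${m\brack a,b,c}=\frac{(q)_m}{(q)_a(q)_b(q)_c}$ if $a,b,c\ge0$ and $a+b+c=m$, and $0$ otherwise. *)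

theory Defs
  imports "HOL-Computational_Algebra.Polynomial" "HOL-Computational_Algebra.Fraction_Field"
begin

text \<open>We work in the field of rational functions Q(q) realised as the fraction field
of the polynomial ring int[q]; q is the indeterminate.  Identities there are exactly
identities of polynomials (resp. Laurent polynomials) in q.\<close>

type_synonym qf = "int poly fract"

definition qvar :: qf where
  "qvar = Fract [:0, 1:] 1"

definition qpoch :: "nat \<Rightarrow> qf" where
  "qpoch m = (\<Prod>i\<in>{1..m}. 1 - qvar ^ i)"

definition qbinom :: "int \<Rightarrow> int \<Rightarrow> qf" where
  "qbinom n k = (if 0 \<le> k \<and> k \<le> n
     then qpoch (nat n) / (qpoch (nat k) * qpoch (nat (n - k))) else 0)"

definition qmultinom :: "int \<Rightarrow> int \<Rightarrow> int \<Rightarrow> int \<Rightarrow> qf" where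
  "qmultinom m a b c = (if 0 \<le> a \<and> 0 \<le> b \<and> 0 \<le> c \<and> a + b + c = m
     then qpoch (nat m) / (qpoch (nat a) * qpoch (nat b) * qpoch (nat c)) else 0)"

definition fqb :: "nat \<Rightarrow> nat \<Rightarrow> qf" where
  "fqb n k = qbinom (int n) (int k) * qbinom (int n + int k) (int k)"

definition coefT :: "nat \<Rightarrow> nat \<Rightarrow> nat \<Rightarrow> qf" where
  "coefT i k j = qbinom (int i + int k) (int i)
     * qmultinom (int j) (int j - int i) (int j - int k) (int i + int k - int j)"

text \<open>Pq r k j = P^{(r)}_{k,j} for r \<ge> 1 (the value at r = 0 is an unused dummy).
  The sum over i \<ge> 0 is restricted to i \<le> j since the multinomial vanishes for i > j.\<close>
fun Pq :: "nat \<Rightarrow> nat \<Rightarrow> nat \<Rightarrow> qf" where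
  "Pq 0 k j = 0"
| "Pq (Suc 0) k j = (if j = k then 1 else 0)"
| "Pq (Suc (Suc r)) k j =
     (\<Sum>i\<in>{0..j}. qvar powi (- ((int k + int i - int j) * int j)) * coefT i k j * Pq (Suc r) k i)"

end

theory Submission imports Defs begin

(* For x in Q(q) put G_j(x) = prod_{m<j} (1 - x q^(m+1)) (1 - x q^(-m)).
   At x = q^n this product is (q)_(n+j) / (q)_(n-j) for j <= n and vanishes for j > n,
   so f(n,j) = G_j(q^n) / (q)_j^2.  The first identity is therefore a specialisation of
   the linearization formula
       G_i(x) G_k(x) = sum_{j <= i+k} A(i,k,j) x^(i+k-j) G_j(x),
   valid for every x, whose coefficients A(i,k,j) have an explicit product form in terms
   of reciprocal q-factorials (extended by zero to negative arguments).  The formula is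
   proved by induction on i: multiplying by the next factor of G_(i+1) is a three-term
   operation on the G_j, mirrored by a three-term recurrence for A.
   The second identity follows from the first by induction on r, exchanging the order
   of the double sum and recognising the recursion defining P^(r+1). *)

lemma qvar_nonzero: "qvar \<noteq> 0"
  by (simp add: qvar_def Zero_fract_def eq_fract)

lemma qvar_power: "qvar ^ m = Fract ([:0,1:] ^ m) 1"
  by (induction m) (auto simp: qvar_def One_fract_def)

text \<open>\<open>1 - q^m\<close> is a nonzero polynomial for \<open>m \<ge> 1\<close>: it takes the value 1 at 0.\<close>
lemma one_minus_qvar_power_nonzero:
  assumes "m \<ge> 1" shows "1 - qvar ^ m \<noteq> 0"
proof
  assume "1 - qvar ^ m = 0"
  moreover have "1 - qvar ^ m = Fract (1 - [:0,1:] ^ m) 1"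
    by (simp add: qvar_power One_fract_def)
  ultimately have "(1::int poly) - [:0,1:] ^ m = 0"
    by (simp add: Zero_fract_def eq_fract)
  hence "poly ((1::int poly) - [:0,1:] ^ m) 0 = 0" by simp
  with assms show False by (simp add: power_0_left)
qed

lemma qpoch_nonzero: "qpoch m \<noteq> 0"
  unfolding qpoch_def using one_minus_qvar_power_nonzero by (auto simp: prod_zero_iff)

lemma qpoch_Suc: "qpoch (Suc m) = qpoch m * (1 - qvar ^ Suc m)"
  unfolding qpoch_def by (simp add: prod.nat_ivl_Suc' mult.commute)

lemma qvar_powi_add: "qvar powi (m + n) = qvar powi m * qvar powi n"
  using qvar_nonzero by (simp add: power_int_add)

lemma qvar_powi_diff: "qvar powi (m - n) = qvar powi m / qvar powi n"
  using qvar_nonzero by (simp add: power_int_diff)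

lemma qvar_powi_nonzero: "qvar powi n \<noteq> 0"
  using qvar_nonzero by simp

text \<open>\<open>1/(q)_m\<close>, extended by zero to negative \<open>m\<close>.  With this convention the
  q-multinomial is a product of such factors, and the one recurrence below holds for
  every integer, which lets boundary terms vanish automatically.\<close>
definition inv_qpoch :: "int \<Rightarrow> qf" where
  "inv_qpoch m = (if m < 0 then 0 else inverse (qpoch (nat m)))"

lemma inv_qpoch_of_nat: "inv_qpoch (int m) = inverse (qpoch m)"
  by (simp add: inv_qpoch_def)

lemma inv_qpoch_pred: "inv_qpoch (m - 1) = (1 - qvar powi m) * inv_qpoch m"
proof (cases "m \<ge> 1")
  case True
  define t where "t = nat m - 1"
  have t: "m = int (Suc t)" using True by (simp add: t_def)
  have power: "qvar powi m = qvar ^ Suc t" unfolding t by (simp only: power_int_of_nat)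
  have pred: "inv_qpoch (m - 1) = inverse (qpoch t)" by (simp add: t inv_qpoch_def)
  have self: "inv_qpoch m = inverse (qpoch (Suc t))"
    unfolding t inv_qpoch_def by (simp del: of_nat_Suc)
  show ?thesis unfolding power pred self qpoch_Suc
    using qpoch_nonzero[of t] one_minus_qvar_power_nonzero[of "Suc t"] by (simp add: field_simps)
next
  case False
  then show ?thesis by (cases "m = 0") (auto simp: inv_qpoch_def)
qed

lemma qmultinom_inv_qpoch:
  "a + b + c = int m \<Longrightarrow> qmultinom (int m) a b c = qpoch m * inv_qpoch a * inv_qpoch b * inv_qpoch c"
  by (auto simp: qmultinom_def inv_qpoch_def field_simps qpoch_nonzero)

section \<open>The linearization coefficients\<close>

text \<open>\<open>A(i,k,j) = q^(-j(i+k-j)) (q)_i (q)_k (q)_(i+k) / ((q)_j (q)_(j-i) (q)_(j-k) (q)_(i+k-j))\<close>,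
  the coefficient of \<open>x^(i+k-j) G_j(x)\<close> in \<open>G_i(x) G_k(x)\<close>.\<close>
definition lin_coeff :: "nat \<Rightarrow> nat \<Rightarrow> int \<Rightarrow> qf" where
  "lin_coeff i k j = qvar powi (-(j * (int i + int k - j))) * qpoch i * qpoch k * qpoch (i + k)
     * inv_qpoch j * inv_qpoch (j - int i) * inv_qpoch (j - int k) * inv_qpoch (int i + int k - j)"

text \<open>The scalar \<open>q^(i+1) + q^(-i) - q^(j+1) - q^(-j)\<close> by which the two factors added
  to \<open>G_i\<close> and to \<open>G_j\<close> differ.\<close>
definition lin_shift :: "nat \<Rightarrow> int \<Rightarrow> qf" where
  "lin_shift i j = qvar ^ Suc i + qvar powi (- int i) - qvar * qvar powi j - qvar powi (- j)"

lemma lin_coeff_below: "lin_coeff i k (-1) = 0"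
  by (simp add: lin_coeff_def inv_qpoch_def)

lemma lin_coeff_above: "lin_coeff i k (int i + int k + 1) = 0"
  by (simp add: lin_coeff_def inv_qpoch_def)

text \<open>The rational-function identity behind the recurrence for \<open>A\<close>, with
  \<open>a = q^i\<close>, \<open>b = q^k\<close>, \<open>c = q^j\<close> and common factors \<open>E\<close>, \<open>Q\<close>, \<open>R\<close>.\<close>
lemma lin_coeff_rec_identity:
  fixes q a b c E Q R :: "'a::field"
  assumes "a \<noteq> 0" "b \<noteq> 0" "c \<noteq> 0"
  shows "E * Q * (1-q*a)*(1-q*a*b) * (1 - c/a) * R =
    E*(q*a*b/c) * Q * (1-c)*(1-c/a)*(1-c/b) * R
    - (q*a + 1/a - q*c - 1/c) * (E*c*Q*(1-q*a*b/c)*R)"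
  using assms by (simp add: field_simps)

text \<open>Three-term recurrence: \<open>A(i+1,k,j) = A(i,k,j-1) - D(i,j) A(i,k,j)\<close>.  Each of the
  three coefficients is written as a common factor times a few binomials in \<open>a, b, c\<close>.\<close>
lemma lin_coeff_rec: "lin_coeff (Suc i) k j = lin_coeff i k (j - 1) - lin_shift i j * lin_coeff i k j"
proof -
  define a where "a = qvar powi int i"
  define b where "b = qvar powi int k"
  define c where "c = qvar powi j"
  define E where "E = qvar powi (-(j*(int i+int k+1-j)))"
  define R where "R = inv_qpoch j * inv_qpoch (j - int i) * inv_qpoch (j - int k) * inv_qpoch (int i + int k + 1 - j)"
  define Q where "Q = qpoch i * qpoch k * qpoch (i+k)"
  have nz: "a \<noteq> 0" "b \<noteq> 0" "c \<noteq> 0"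
    unfolding a_def b_def c_def by (simp_all only: qvar_powi_nonzero not_False_eq_True)
  have pSi: "qvar ^ Suc i = qvar * a" by (simp add: a_def)
  have pji: "qvar powi (j - int i) = c / a" by (simp add: qvar_powi_diff a_def c_def)
  have pikj: "qvar powi (int i + int k + 1 - j) = qvar * a * b / c"
    by (simp add: qvar_powi_diff qvar_powi_add a_def b_def c_def mult.commute qvar_nonzero)
  have shifted_i: "inv_qpoch (j - int i - 1) = (1 - c/a) * inv_qpoch (j - int i)"
    using inv_qpoch_pred[of "j - int i"] pji by simp
  have A_Suc: "lin_coeff (Suc i) k j = E * Q * (1-qvar*a)*(1-qvar*a*b) * (1 - c/a) * R"
  proof -
    have q1: "qpoch (Suc i) = qpoch i * (1 - qvar*a)" using qpoch_Suc[of i] pSi by simp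
    have q2: "qpoch (Suc i + k) = qpoch (i+k) * (1 - qvar*a*b)"
      using qpoch_Suc[of "i+k"] by (simp add: a_def b_def power_add)
    have r1: "j - int (Suc i) = j - int i - 1" and r2: "int (Suc i) + int k - j = int i + int k + 1 - j"
      by simp_all
    show ?thesis unfolding lin_coeff_def q1 q2 r1 r2 E_def[symmetric] shifted_i by (simp add: Q_def R_def)
  qed
  have A_pred: "lin_coeff i k (j - 1) = E*(qvar*a*b/c) * Q * (1-c)*(1-c/a)*(1-c/b) * R"
  proof -
    have "-((j-1)*(int i+int k+1-j)) = -(j*(int i+int k+1-j)) + (int i + int k + 1 - j)"
      by (simp add: algebra_simps)
    then have e: "qvar powi (-((j-1)*(int i+int k+1-j))) = E * (qvar * a * b / c)"
      by (simp only: qvar_powi_add E_def pikj)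
    have r1: "inv_qpoch (j - 1) = (1 - c) * inv_qpoch j"
      using inv_qpoch_pred[of j] by (simp add: c_def)
    have r2: "j - 1 - int i = j - int i - 1" and r3: "int i + int k - (j - 1) = int i + int k + 1 - j"
      by simp_all
    have r4: "inv_qpoch (j - 1 - int k) = (1 - c/b) * inv_qpoch (j - int k)"
      using inv_qpoch_pred[of "j - int k"] by (simp add: qvar_powi_diff b_def c_def algebra_simps)
    show ?thesis unfolding lin_coeff_def e r1 r2 r3 r4 shifted_i by (simp add: Q_def R_def ac_simps)
  qed
  have A_same: "lin_coeff i k j = E*c*Q*(1-qvar*a*b/c)*R"
  proof -
    have "-(j*(int i+int k-j)) = -(j*(int i+int k+1-j)) + j" by (simp add: algebra_simps)
    then have e: "qvar powi (-(j*(int i+int k-j))) = E * c" by (simp only: qvar_powi_add E_def c_def)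
    have r: "inv_qpoch (int i + int k - j) = (1 - qvar*a*b/c) * inv_qpoch (int i + int k + 1 - j)"
      using inv_qpoch_pred[of "int i + int k + 1 - j"] pikj by (simp add: algebra_simps)
    show ?thesis unfolding lin_coeff_def e r by (simp add: Q_def R_def ac_simps)
  qed
  have "lin_shift i j = qvar*a + 1/a - qvar*c - 1/c"
    unfolding lin_shift_def pSi by (simp add: power_int_minus_divide a_def c_def)
  then show ?thesis unfolding A_Suc A_pred A_same by (simp only: lin_coeff_rec_identity[OF nz])
qed

section \<open>The products G_j and their linearization\<close>

fun G :: "nat \<Rightarrow> qf \<Rightarrow> qf" where
  "G 0 x = 1"
| "G (Suc j) x = G j x * (1 - x * qvar ^ Suc j) * (1 - x * qvar powi (- int j))"

lemma same_product_quadratics: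
  fixes x u1 v1 u2 v2 g :: "'a::comm_ring_1"
  assumes "u1 * v1 = u2 * v2"
  shows "(1 - x*u1) * (1 - x*v1) * g = g * (1 - x*u2) * (1 - x*v2) - (u1 + v1 - u2 - v2) * x * g"
proof -
  have "(1-x*u1)*(1-x*v1)*g - (g*(1-x*u2)*(1-x*v2) - (u1+v1-u2-v2)*x*g) = x*x*(u1*v1 - u2*v2)*g"
    by (simp add: algebra_simps)
  with assms show ?thesis by simp
qed

text \<open>Multiplying \<open>G_j\<close> by the factor that extends \<open>G_i\<close> to \<open>G_(i+1)\<close> gives
  \<open>G_(j+1)\<close> minus a multiple of \<open>x G_j\<close>: both factors have product \<open>q\<close>.\<close>
lemma G_times_factor:
  "(1 - x*qvar^Suc i) * (1 - x*qvar powi (-int i)) * G j x = G (Suc j) x - lin_shift i (int j) * x * G j x"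
proof -
  have "qvar ^ Suc i * qvar powi (- int i) = (qvar * qvar ^ j) * qvar powi (- int j)"
    using qvar_nonzero by (simp add: power_int_minus_divide field_simps)
  from same_product_quadratics[OF this, of x "G j x"] show ?thesis
    unfolding G.simps lin_shift_def by (simp add: algebra_simps)
qed

lemma G_linearization:
  "G i x * G k x = (\<Sum>j\<in>{0..i+k}. lin_coeff i k (int j) * x^(i+k-j) * G j x)"
proof (induction i)
  case 0
  have "(\<Sum>j\<in>{0..k}. lin_coeff 0 k (int j) * x^(k-j) * G j x)
      = (\<Sum>j\<in>{k}. lin_coeff 0 k (int j) * x^(k-j) * G j x)"
    by (rule sum.mono_neutral_right) (auto simp: lin_coeff_def inv_qpoch_def)
  also have "\<dots> = G k x"
    using qpoch_nonzero[of k] by (simp add: lin_coeff_def inv_qpoch_def qpoch_def field_simps)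
  finally show ?case by simp
next
  case (Suc i)
  define A where "A = lin_coeff i k"
  define D where "D = (\<lambda>j::nat. lin_shift i (int j))"
  let ?F = "(1 - x*qvar^Suc i) * (1 - x*qvar powi (-int i))"
  let ?N = "Suc (i + k)"
  have "G (Suc i) x * G k x = ?F * (G i x * G k x)" by (simp add: ac_simps)
  also have "\<dots> = (\<Sum>j\<in>{0..i+k}. A (int j) * x^(i+k-j) * (?F * G j x))"
    unfolding Suc.IH sum_distrib_left A_def by (simp add: ac_simps)
  also have "\<dots> = (\<Sum>j\<in>{0..i+k}. A (int j) * x^(i+k-j) * G (Suc j) x)
      - (\<Sum>j\<in>{0..i+k}. D j * A (int j) * x^(?N-j) * G j x)"
    unfolding G_times_factor sum_subtractf[symmetric] D_def
    by (rule sum.cong) (auto simp: algebra_simps Suc_diff_le)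
  also have "(\<Sum>j\<in>{0..i+k}. A (int j) * x^(i+k-j) * G (Suc j) x)
      = (\<Sum>j\<in>{0..?N}. A (int j - 1) * x^(?N-j) * G j x)"
    by (subst sum.atLeast0_atMost_Suc_shift) (simp add: A_def lin_coeff_below)
  also have "(\<Sum>j\<in>{0..i+k}. D j * A (int j) * x^(?N-j) * G j x)
      = (\<Sum>j\<in>{0..?N}. D j * A (int j) * x^(?N-j) * G j x)"
    using lin_coeff_above[of i k] by (subst sum.atLeast0_atMost_Suc) (simp add: A_def ac_simps)
  also have "(\<Sum>j\<in>{0..?N}. A (int j - 1) * x^(?N-j) * G j x)
      - (\<Sum>j\<in>{0..?N}. D j * A (int j) * x^(?N-j) * G j x)
      = (\<Sum>j\<in>{0..Suc i+k}. lin_coeff (Suc i) k (int j) * x^(Suc i+k-j) * G j x)"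
    unfolding sum_subtractf[symmetric] lin_coeff_rec A_def D_def
    by (rule sum.cong) (auto simp: algebra_simps)
  finally show ?case .
qed

section \<open>Evaluation at x = q^n\<close>

lemma G_qvar_power: "j \<le> n \<Longrightarrow> G j (qvar^n) * qpoch (n - j) = qpoch (n + j)"
proof (induction j)
  case 0 then show ?case by simp
next
  case (Suc j)
  have IH: "G j (qvar^n) * qpoch (n - j) = qpoch (n + j)" using Suc by simp
  have "qvar^n * qvar powi (- int j) = qvar ^ (n - j)"
    using Suc.prems qvar_nonzero by (simp add: power_int_minus_divide power_diff)
  moreover have "qpoch (n - j) = qpoch (n - Suc j) * (1 - qvar ^ (n - j))"
    using Suc.prems qpoch_Suc[of "n - Suc j"] by (simp add: Suc_diff_Suc)
  moreover have "qpoch (n + Suc j) = qpoch (n + j) * (1 - qvar^n * qvar ^ Suc j)"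
    using qpoch_Suc[of "n + j"] by (simp add: power_add)
  ultimately show ?case unfolding G.simps IH[symmetric] by (simp add: ac_simps)
qed

text \<open>For \<open>j > n\<close> the factor \<open>1 - q^n q^(-n)\<close> of \<open>G_j(q^n)\<close> vanishes.\<close>
lemma G_qvar_power_vanishes: "n < j \<Longrightarrow> G j (qvar^n) = 0"
proof (induction j)
  case 0 then show ?case by simp
next
  case (Suc j)
  have "qvar^n * qvar powi (- int n) = 1" using qvar_nonzero by (simp add: power_int_minus_divide)
  with Suc show ?case by (cases "j = n") auto
qed

lemma fqb_via_G: "fqb n j = G j (qvar^n) * inverse (qpoch j) ^ 2"
proof (cases "j \<le> n")
  case True
  have binom1: "qbinom (int n) (int j) = qpoch n / (qpoch j * qpoch (n - j))"
    using True by (simp add: qbinom_def nat_diff_distrib)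
  have binom2: "qbinom (int n + int j) (int j) = qpoch (n + j) / (qpoch j * qpoch n)"
    by (simp add: qbinom_def nat_add_distrib)
  show ?thesis unfolding fqb_def binom1 binom2 G_qvar_power[OF True, symmetric]
    using qpoch_nonzero[of n] qpoch_nonzero[of j] qpoch_nonzero[of "n-j"]
    by (simp add: field_simps power2_eq_square)
next
  case False
  then show ?thesis by (simp add: fqb_def qbinom_def G_qvar_power_vanishes)
qed

lemma fqb_vanishes: "n < j \<Longrightarrow> fqb n j = 0"
  by (simp add: fqb_via_G G_qvar_power_vanishes)

lemma coefT_vanishes: "j < i \<or> i + k < j \<Longrightarrow> coefT i k j = 0"
  by (auto simp: coefT_def qmultinom_def)

lemma lin_term_at_qvar_power:
  assumes "j \<le> i + k"
  shows "inverse (qpoch i) ^ 2 * inverse (qpoch k) ^ 2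
           * (lin_coeff i k (int j) * (qvar ^ n) ^ (i+k-j) * G j (qvar ^ n))
       = qvar powi ((int n - int j) * (int k + int i - int j)) * coefT i k j * fqb n j"
proof -
  have "int (i+k-j) = int i + int k - int j" using assms by (simp add: of_nat_diff)
  then have "(int n - int j) * (int k + int i - int j) = int n * int (i+k-j) + (-(int j*(int i+int k-int j)))"
    by (simp add: algebra_simps)
  then have power: "qvar powi ((int n - int j) * (int k + int i - int j))
      = (qvar ^ n) ^ (i+k-j) * qvar powi (-(int j*(int i+int k-int j)))"
    by (simp only: qvar_powi_add power_int_mult power_int_of_nat)
  have binom: "qbinom (int i + int k) (int i) = qpoch (i+k) / (qpoch i * qpoch k)"
    by (simp add: qbinom_def nat_add_distrib)
  have multinom: "qmultinom (int j) (int j - int i) (int j - int k) (int i + int k - int j)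
      = qpoch j * inv_qpoch (int j - int i) * inv_qpoch (int j - int k) * inv_qpoch (int i + int k - int j)"
    by (rule qmultinom_inv_qpoch) simp
  show ?thesis
    unfolding power coefT_def binom multinom fqb_via_G lin_coeff_def inv_qpoch_of_nat
    using qpoch_nonzero[of i] qpoch_nonzero[of k] qpoch_nonzero[of j]
    by (simp add: field_simps power2_eq_square)
qed

theorem fqb_product:
  "fqb n i * fqb n k = (\<Sum>j\<in>{0..i+k}. qvar powi ((int n - int j) * (int k + int i - int j))
                                        * coefT i k j * fqb n j)"
proof -
  define C where "C = inverse (qpoch i) ^ 2 * inverse (qpoch k) ^ 2"
  have "fqb n i * fqb n k = C * (G i (qvar ^ n) * G k (qvar ^ n))"
    unfolding fqb_via_G C_def by (simp add: ac_simps)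
  also have "\<dots> = (\<Sum>j\<in>{0..i+k}. C * (lin_coeff i k (int j) * (qvar ^ n)^(i+k-j) * G j (qvar ^ n)))"
    unfolding G_linearization sum_distrib_left ..
  also have "\<dots> = (\<Sum>j\<in>{0..i+k}. qvar powi ((int n - int j) * (int k + int i - int j))
                                  * coefT i k j * fqb n j)"
    unfolding C_def by (rule sum.cong) (simp_all add: lin_term_at_qvar_power)
  finally show ?thesis .
qed

section \<open>The power formula for f(n,k)^r\<close>

definition power_term :: "nat \<Rightarrow> nat \<Rightarrow> nat \<Rightarrow> nat \<Rightarrow> qf" where
  "power_term r n k j = qvar powi ((int r * int k - int j) * int n) * fqb n j * Pq r k j"

text \<open>The recursion for \<open>P^(r+1)\<close>, multiplied out against \<open>q^(((r+1)k-j)n) f(n,j)\<close>,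
  is the \<open>j\<close>-th coefficient of the double sum obtained from the product formula.\<close>
lemma power_term_Suc:
  assumes "j \<le> n"
  shows "power_term (Suc (Suc s)) n k j
    = (\<Sum>i\<in>{0..n}. qvar powi ((int (Suc s) * int k - int i) * int n) * Pq (Suc s) k i
         * (qvar powi ((int n - int j) * (int k + int i - int j)) * coefT i k j * fqb n j))"
proof -
  let ?e = "qvar powi ((int (Suc (Suc s)) * int k - int j) * int n)"
  let ?t = "\<lambda>i. ?e * fqb n j * (qvar powi (- ((int k + int i - int j) * int j)) * coefT i k j * Pq (Suc s) k i)"
  have "power_term (Suc (Suc s)) n k j = (\<Sum>i\<in>{0..j}. ?t i)"
    by (simp only: power_term_def Pq.simps sum_distrib_left)
  also have "\<dots> = (\<Sum>i\<in>{0..n}. ?t i)"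
    using assms by (intro sum.mono_neutral_left) (auto simp: coefT_vanishes)
  also have "\<dots> = (\<Sum>i\<in>{0..n}. qvar powi ((int (Suc s) * int k - int i) * int n) * Pq (Suc s) k i
         * (qvar powi ((int n - int j) * (int k + int i - int j)) * coefT i k j * fqb n j))"
  proof (rule sum.cong[OF refl])
    fix i
    have "?e * qvar powi (- ((int k + int i - int j) * int j))
      = qvar powi ((int (Suc s) * int k - int i) * int n) * qvar powi ((int n - int j) * (int k + int i - int j))"
      unfolding qvar_powi_add[symmetric] by (simp add: algebra_simps)
    then show "?t i = qvar powi ((int (Suc s) * int k - int i) * int n) * Pq (Suc s) k i
         * (qvar powi ((int n - int j) * (int k + int i - int j)) * coefT i k j * fqb n j)"
      by (simp add: ac_simps)
  qed
  finally show ?thesis .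
qed

theorem fqb_power: "fqb n k ^ Suc s = (\<Sum>j\<in>{0..n}. power_term (Suc s) n k j)"
proof (induction s)
  case 0
  show ?case
  proof (cases "k \<le> n")
    case True
    then have "(\<Sum>j\<in>{0..n}. power_term 1 n k j) = (\<Sum>j\<in>{k}. power_term 1 n k j)"
      by (intro sum.mono_neutral_right) (auto simp: power_term_def)
    then show ?thesis by (simp add: power_term_def)
  next
    case False then show ?thesis by (simp add: power_term_def fqb_vanishes)
  qed
next
  case (Suc s)
  define T where "T = (\<lambda>i j. qvar powi ((int (Suc s) * int k - int i) * int n) * Pq (Suc s) k i
     * (qvar powi ((int n - int j) * (int k + int i - int j)) * coefT i k j * fqb n j))"
  have "fqb n k ^ Suc (Suc s) = (\<Sum>i\<in>{0..n}. qvar powi ((int (Suc s) * int k - int i) * int n)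
        * Pq (Suc s) k i * (fqb n i * fqb n k))"
    unfolding power_Suc2[of _ "Suc s"] Suc.IH sum_distrib_right power_term_def by (simp add: ac_simps)
  also have "\<dots> = (\<Sum>i\<in>{0..n}. \<Sum>j\<in>{0..i+k}. T i j)"
    unfolding fqb_product sum_distrib_left T_def ..
  also have "\<dots> = (\<Sum>i\<in>{0..n}. \<Sum>j\<in>{0..n+k}. T i j)"
    by (intro sum.cong refl sum.mono_neutral_left) (auto simp: T_def coefT_vanishes)
  also have "\<dots> = (\<Sum>j\<in>{0..n+k}. \<Sum>i\<in>{0..n}. T i j)"
    by (rule sum.swap)
  also have "\<dots> = (\<Sum>j\<in>{0..n+k}. power_term (Suc (Suc s)) n k j)"
  proof (rule sum.cong[OF refl])
    fix j
    show "(\<Sum>i\<in>{0..n}. T i j) = power_term (Suc (Suc s)) n k j"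
    proof (cases "j \<le> n")
      case True then show ?thesis by (simp add: T_def power_term_Suc)
    next
      case False then show ?thesis by (simp add: T_def power_term_def fqb_vanishes)
    qed
  qed
  also have "\<dots> = (\<Sum>j\<in>{0..n}. power_term (Suc (Suc s)) n k j)"
    by (intro sum.mono_neutral_right) (auto simp: power_term_def fqb_vanishes)
  finally show ?case .
qed

theorem mainTheorem6:
  shows "(\<forall>n i k :: nat.
            fqb n i * fqb n k =
            (\<Sum>j\<in>{0..i+k}. qvar powi ((int n - int j) * (int k + int i - int j))
                              * coefT i k j * fqb n j))
       \<and> (\<forall>n k r :: nat. 1 \<le> r \<longrightarrow>
            fqb n k ^ r =
            (\<Sum>j\<in>{0..n}. qvar powi ((int r * int k - int j) * int n) * fqb n j * Pq r k j))"
proof (intro conjI allI impI)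
  fix n i k :: nat
  show "fqb n i * fqb n k = (\<Sum>j\<in>{0..i+k}. qvar powi ((int n - int j) * (int k + int i - int j))
                                              * coefT i k j * fqb n j)"
    by (rule fqb_product)
next
  fix n k r :: nat
  assume "1 \<le> r"
  then obtain s where "r = Suc s" by (cases r) auto
  then show "fqb n k ^ r = (\<Sum>j\<in>{0..n}. qvar powi ((int r * int k - int j) * int n) * fqb n j * Pq r k j)"
    using fqb_power[of n k s] by (simp add: power_term_def)
qed

end
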